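(* Let $m,n\ge2$ and $W$ a channel from $\{1,\dots,m\}$ to $\{1,\dots,n\}$. (i) If $m\le n$, define for each $j$: $\beta'_j=\frac{(\mathbf{1}W)_j-1}{\mathrm{w}(W_{*,j})-1}$ if $\mathrm{w}(W_{*,j})>1$ and $\beta'_j=0$ otherwise, and $\beta=\max(0,\max_j\beta'_j)$. Then $\overline{P}_W(m)\le 1-\beta$, and if $\beta=0$ then $\overline{P}_W(m)=1$. (ii) If $m\ge n$, let $h=\min(1,\min_{1\le j\le n}(\mathbf{1}W)_j)$. Then $\overline{P}_W(n)\le h$, and if $h=1$ then $\overline{P}_W(n)=1$.
   Context: A channel is a row-stochastic matrix; $\mathcal{D}$ is the set of deterministic (0-1) channels from $\{1,\dots,m\}$ to $\{1,\dots,n\}$, $\mathrm{rank}(D)$ the matrix rank. $\Lambda(W)=\{\lambda\text{ probability distribution on }\mathcal{D}: W=\sum_D\lambda_DD\}$, $P_\lambda(r)=\lambda(\{D:\mathrm{rank}(D)=r\})$, $\overline{P}_W(r)=\max_{\lambda\in\Lambda(W)}P_\lambda(r)$. $\mathbf{1}$ is the all-one row vector of length $m$ ($\mathbf{1}W$ = column sums), $W_{*,j}$ is the $j$-th column, and $\mathrm{w}(x)$ is the number of nonzero entries of $x$. *)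

theory Defs
  imports "HOL-Analysis.Analysis"
begin

text \<open>Matrices are real^'n^'m: rows indexed by the finite type 'm (inputs 1..m),
columns by 'n (outputs 1..n).  W $ i $ j is the (i,j) entry.\<close>

definition channel :: "real^'n^'m \<Rightarrow> bool" where
  "channel W \<longleftrightarrow> (\<forall>i j. W $ i $ j \<ge> 0) \<and> (\<forall>i. (\<Sum>j\<in>UNIV. W $ i $ j) = 1)"

definition det_channels :: "(real^'n^'m) set" where
  "det_channels = {D. channel D \<and> (\<forall>i j. D $ i $ j = 0 \<or> D $ i $ j = 1)}"

definition decomps :: "real^'n^'m \<Rightarrow> (real^'n^'m \<Rightarrow> real) set" where
  "decomps W = {lam. (\<forall>D. lam D \<ge> 0) \<and> (\<forall>D. D \<notin> det_channels \<longrightarrow> lam D = 0)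
     \<and> (\<Sum>D\<in>det_channels. lam D) = 1
     \<and> W = (\<Sum>D\<in>det_channels. lam D *\<^sub>R D)}"

definition P_rank :: "(real^'n^'m \<Rightarrow> real) \<Rightarrow> nat \<Rightarrow> real" where
  "P_rank lam r = (\<Sum>D\<in>{D\<in>det_channels. rank D = r}. lam D)"

definition P_max :: "real^'n^'m \<Rightarrow> nat \<Rightarrow> real" where
  "P_max W r = Sup ((\<lambda>lam. P_rank lam r) ` decomps W)"

definition col_sum :: "real^'n^'m \<Rightarrow> 'n \<Rightarrow> real" where
  "col_sum W j = (\<Sum>i\<in>UNIV. W $ i $ j)"

definition col_weight :: "real^'n^'m \<Rightarrow> 'n \<Rightarrow> nat" where
  "col_weight W j = card {i. W $ i $ j \<noteq> 0}"

definition beta' :: "real^'n^'m \<Rightarrow> 'n \<Rightarrow> real" where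
  "beta' W j = (if col_weight W j > 1
      then (col_sum W j - 1) / (real (col_weight W j) - 1) else 0)"

definition beta :: "real^'n^'m \<Rightarrow> real" where
  "beta W = max 0 (Max (range (beta' W)))"

definition hval :: "real^'n^'m \<Rightarrow> real" where
  "hval W = min 1 (Min (range (col_sum W)))"

end

(*
  A decomposition of W into deterministic channels is a probability distribution mu on the maps
  f from inputs to outputs, and the channel of f has rank m iff f is injective and rank n iff f is
  surjective.  The j-th column sum of W is the expected number of preimages of j under a mu-random
  map f: at most 1 if f is injective and at most the column weight w otherwise, so c <= P + w (1 - P)
  for the injective mass P, which gives P <= 1 - beta; at least 1 if f is surjective, so the
  surjective mass is at most every column sum.

  The equality cases need decompositions supported on injective, resp. surjective, maps.  They
  come from an integrality theorem: a stochastic matrix whose column sums lie between integers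
  a_j and b_j is a mixture of deterministic matrices whose column counts lie between a_j and b_j.
  By induction on the number of non-integral entries and column sums: the non-integral entries
  carry a nonzero direction with zero row sums that keeps the integral column sums fixed, and
  moving along it both ways until one more of these quantities becomes integral writes the
  matrix as a mixture of two less fractional ones.
*)
theory Submission
  imports Defs
begin

section \<open>Integral decomposition of bounded stochastic matrices\<close>

lemma homogeneous_system_nontrivial_solution:
  fixes c :: "'q \<Rightarrow> 'e \<Rightarrow> real"
  assumes "finite Q" "finite E" "card Q < card E"
  shows "\<exists>x. (\<forall>e. e \<notin> E \<longrightarrow> x e = 0) \<and> (\<exists>e\<in>E. x e \<noteq> 0)
             \<and> (\<forall>q\<in>Q. (\<Sum>e\<in>E. c q e * x e) = 0)"
  using assms
proof (induction Q arbitrary: E c rule: finite_induct)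
  case empty
  then obtain e0 where "e0 \<in> E" by fastforce
  then show ?case by (intro exI[of _ "\<lambda>e. if e = e0 then 1 else 0"]) auto
next
  case (insert q Q)
  show ?case
  proof (cases "\<forall>e\<in>E. c q e = 0")
    case True
    with insert show ?thesis by force
  next
    case False
    then obtain e0 where e0: "e0 \<in> E" "c q e0 \<noteq> 0" by auto
    define E' where "E' = E - {e0}"
    \<comment> \<open>Gaussian elimination of the unknown at e0 using equation q\<close>
    define c' where "c' = (\<lambda>q' e. c q' e - c q' e0 * c q e / c q e0)"
    have "finite E'" "card Q < card E'"
      using insert e0 by (auto simp: E'_def)
    from insert.IH[OF this, of c'] obtain x' where x':
      "\<forall>e. e \<notin> E' \<longrightarrow> x' e = 0" "\<exists>e\<in>E'. x' e \<noteq> 0" "\<forall>q'\<in>Q. (\<Sum>e\<in>E'. c' q' e * x' e) = 0"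
      by auto
    define v where "v = - (\<Sum>e\<in>E'. c q e * x' e) / c q e0"
    define x where "x = x'(e0 := v)"
    have split: "(\<Sum>e\<in>E. g e * x e) = g e0 * v + (\<Sum>e\<in>E'. g e * x' e)" for g
    proof -
      have "E = insert e0 E'" "e0 \<notin> E'" "finite E'" using e0 insert.prems by (auto simp: E'_def)
      then show ?thesis by (auto simp: x_def intro!: sum.cong)
    qed
    have "(\<Sum>e\<in>E. c q' e * x e) = 0" if "q' \<in> Q" for q'
    proof -
      have "0 = (\<Sum>e\<in>E'. c' q' e * x' e)" using x' that by auto
      also have "\<dots> = (\<Sum>e\<in>E'. c q' e * x' e) - c q' e0 / c q e0 * (\<Sum>e\<in>E'. c q e * x' e)"
        unfolding c'_def by (simp add: algebra_simps sum_subtractf sum_distrib_left)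
      also have "\<dots> = (\<Sum>e\<in>E. c q' e * x e)"
        unfolding split v_def by simp
      finally show ?thesis by simp
    qed
    moreover have "(\<Sum>e\<in>E. c q e * x e) = 0"
      unfolding split using e0 by (simp add: v_def field_simps)
    moreover have "\<forall>e. e \<notin> E \<longrightarrow> x e = 0" "\<exists>e\<in>E. x e \<noteq> 0"
      using x' e0 by (auto simp: E'_def x_def)
    ultimately show ?thesis by auto
  qed
qed

lemma Ints_sum_nonint_summand:
  fixes g :: "'a \<Rightarrow> real"
  assumes "finite A" "(\<Sum>x\<in>A. g x) \<in> \<int>" "y \<in> A" "g y \<notin> \<int>"
  shows "\<exists>x\<in>A - {y}. g x \<notin> \<int>"
proof (rule ccontr)
  assume "\<not> ?thesis"
  then have "(\<Sum>x\<in>A - {y}. g x) \<in> \<int>" by auto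
  moreover have "g y = (\<Sum>x\<in>A. g x) - (\<Sum>x\<in>A - {y}. g x)"
    using assms(1,3) by (simp add: sum.remove)
  ultimately show False using assms(2,4) by (metis Ints_diff)
qed

lemma card_image_le_half:
  assumes "finite E" "\<forall>x\<in>E. \<exists>y\<in>E. y \<noteq> x \<and> g y = g x"
  shows "2 * card (g ` E) \<le> card E"
proof -
  have "2 * card (g ` E) = (\<Sum>b\<in>g ` E. 2)" by simp
  also have "\<dots> \<le> (\<Sum>b\<in>g ` E. card {x\<in>E. g x = b})"
  proof (rule sum_mono)
    fix b assume "b \<in> g ` E"
    then obtain x y where "x \<in> E" "y \<in> E" "y \<noteq> x" "g x = b" "g y = b" using assms(2) by force
    then have "{x, y} \<subseteq> {x\<in>E. g x = b}" by auto
    then show "2 \<le> card {x\<in>E. g x = b}"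
      using card_mono[of "{x\<in>E. g x = b}" "{x, y}"] \<open>y \<noteq> x\<close> assms(1) by auto
  qed
  also have "\<dots> = card E"
    using sum.group[of E "g ` E" g "\<lambda>_. 1::nat"] assms(1) by simp
  finally show ?thesis .
qed

lemma add_mult_between_floor_ceiling:
  fixes u v t :: real
  assumes "0 \<le> t" "t \<le> (if v > 0 then \<lceil>u\<rceil> - u else \<lfloor>u\<rfloor> - u) / v"
  shows "\<lfloor>u\<rfloor> \<le> u + t * v \<and> u + t * v \<le> \<lceil>u\<rceil>"
proof -
  have "\<lfloor>u\<rfloor> \<le> u" "u \<le> \<lceil>u\<rceil>" by (rule of_int_floor_le, rule le_of_int_ceiling)
  consider "v > 0" | "v < 0" | "v = 0" by linarith
  then show ?thesis
  proof cases
    case 1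
    then have "t * v \<le> \<lceil>u\<rceil> - u" "0 \<le> t * v" using assms by (simp_all add: pos_le_divide_eq)
    with \<open>\<lfloor>u\<rfloor> \<le> u\<close> show ?thesis by linarith
  next
    case 2
    then have "\<lfloor>u\<rfloor> - u \<le> t * v" "t * v \<le> 0"
      using assms by (simp_all add: neg_le_divide_eq mult_nonneg_nonpos)
    with \<open>u \<le> \<lceil>u\<rceil>\<close> show ?thesis by linarith
  qed (use \<open>\<lfloor>u\<rfloor> \<le> u\<close> \<open>u \<le> \<lceil>u\<rceil>\<close> in simp)
qed

lemma ray_reaches_integer:
  fixes u v :: "'k \<Rightarrow> real"
  assumes "finite K" "\<forall>k\<in>K. u k \<notin> \<int>" "\<exists>k\<in>K. v k \<noteq> 0"
  shows "\<exists>t>0. (\<forall>k\<in>K. \<lfloor>u k\<rfloor> \<le> u k + t * v k \<and> u k + t * v k \<le> \<lceil>u k\<rceil>)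
               \<and> (\<exists>k\<in>K. u k + t * v k \<in> \<int>)"
proof -
  define K' where "K' = {k\<in>K. v k \<noteq> 0}"
  \<comment> \<open>the time at which coordinate k reaches the integer it is heading for\<close>
  define s where "s k = (if v k > 0 then \<lceil>u k\<rceil> - u k else \<lfloor>u k\<rfloor> - u k) / v k" for k
  have s_pos: "0 < s k" if "k \<in> K'" for k
  proof -
    have "u k \<notin> \<int>" using that assms(2) by (simp add: K'_def)
    then have "\<lfloor>u k\<rfloor> < u k" "u k < \<lceil>u k\<rceil>"
      by (metis Ints_of_int of_int_floor_le order_le_less, metis Ints_of_int le_of_int_ceiling order_le_less)
    with that show ?thesis by (auto simp: K'_def s_def divide_pos_pos divide_neg_neg)
  qed
  define t where "t = Min (s ` K')"
  have "finite K'" "K' \<noteq> {}" using assms(1,3) by (auto simp: K'_def)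
  then obtain k0 where k0: "k0 \<in> K'" "t = s k0" unfolding t_def using Min_in by blast
  then have "0 < t" using s_pos by simp
  have "\<lfloor>u k\<rfloor> \<le> u k + t * v k \<and> u k + t * v k \<le> \<lceil>u k\<rceil>" if "k \<in> K" for k
  proof (cases "k \<in> K'")
    case True
    then have "t \<le> s k" unfolding t_def using \<open>finite K'\<close> by simp
    with \<open>0 < t\<close> show ?thesis unfolding s_def by (intro add_mult_between_floor_ceiling) simp_all
  qed (use that K'_def in auto)
  moreover have "u k0 + t * v k0 \<in> \<int>" using k0 by (simp add: K'_def s_def)
  ultimately show ?thesis using \<open>0 < t\<close> k0(1) by (auto simp: K'_def)
qed

definition row_sum :: "('m \<Rightarrow> 'n::finite \<Rightarrow> real) \<Rightarrow> 'm \<Rightarrow> real" where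
  "row_sum X i = (\<Sum>j\<in>UNIV. X i j)"

definition column_sum :: "('m::finite \<Rightarrow> 'n \<Rightarrow> real) \<Rightarrow> 'n \<Rightarrow> real" where
  "column_sum X j = (\<Sum>i\<in>UNIV. X i j)"

lemma sum_column_sum_eq_sum_row_sum: "(\<Sum>j\<in>UNIV. column_sum X j) = (\<Sum>i\<in>UNIV. row_sum X i)"
  unfolding column_sum_def row_sum_def by (rule sum.swap)

lemma sum_fst_indicator_eq_row_sum:
  fixes x :: "'m::finite \<times> 'n::finite \<Rightarrow> real"
  assumes "\<forall>e. e \<notin> E \<longrightarrow> x e = 0"
  shows "(\<Sum>e\<in>E. of_bool (fst e = i) * x e) = row_sum (curry x) i"
proof -
  have "(\<Sum>e\<in>E. of_bool (fst e = i) * x e) = (\<Sum>e\<in>UNIV. of_bool (fst e = i) * x e)"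
    using assms by (intro sum.mono_neutral_left) auto
  also have "\<dots> = (\<Sum>i'\<in>UNIV. \<Sum>j\<in>UNIV. of_bool (i' = i) * x (i', j))"
    by (simp only: sum.cartesian_product UNIV_Times_UNIV split_def prod.collapse)
  also have "\<dots> = row_sum (curry x) i"
    by (simp add: row_sum_def flip: sum_distrib_left)
  finally show ?thesis .
qed

lemma sum_snd_indicator_eq_column_sum:
  fixes x :: "'m::finite \<times> 'n::finite \<Rightarrow> real"
  assumes "\<forall>e. e \<notin> E \<longrightarrow> x e = 0"
  shows "(\<Sum>e\<in>E. of_bool (snd e = j) * x e) = column_sum (curry x) j"
proof -
  have "(\<Sum>e\<in>E. of_bool (snd e = j) * x e) = (\<Sum>e\<in>UNIV. of_bool (snd e = j) * x e)"
    using assms by (intro sum.mono_neutral_left) auto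
  also have "\<dots> = (\<Sum>i\<in>UNIV. \<Sum>j'\<in>UNIV. of_bool (j' = j) * x (i, j'))"
    by (simp only: sum.cartesian_product UNIV_Times_UNIV split_def prod.collapse)
  also have "\<dots> = column_sum (curry x) j"
    by (simp add: column_sum_def)
  finally show ?thesis .
qed

lemma exists_direction_few_constraints:
  fixes E :: "('m::finite \<times> 'n::finite) set" and R :: "'m set" and C :: "'n set"
  assumes "card R + card C < card E"
  shows "\<exists>d. (\<exists>i j. d i j \<noteq> 0) \<and> (\<forall>i j. d i j \<noteq> 0 \<longrightarrow> (i, j) \<in> E)
           \<and> (\<forall>i\<in>R. row_sum d i = 0) \<and> (\<forall>j\<in>C. column_sum d j = 0)"
proof -
  define Q where "Q = Inl ` R \<union> Inr ` C"
  define c :: "'m + 'n \<Rightarrow> 'm \<times> 'n \<Rightarrow> real"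
    where "c = case_sum (\<lambda>i e. of_bool (fst e = i)) (\<lambda>j e. of_bool (snd e = j))"
  have "card Q = card R + card C"
    unfolding Q_def by (subst card_Un_disjoint) (auto simp: card_image)
  then obtain x where x: "\<forall>e. e \<notin> E \<longrightarrow> x e = 0" "\<exists>e\<in>E. x e \<noteq> 0"
    "\<forall>q\<in>Q. (\<Sum>e\<in>E. c q e * x e) = 0"
    using homogeneous_system_nontrivial_solution[of Q E c] assms by auto
  have "row_sum (curry x) i = 0" if "i \<in> R" for i
    using x(3)[rule_format, of "Inl i"] that sum_fst_indicator_eq_row_sum[OF x(1), of i] by (simp add: Q_def c_def)
  moreover have "column_sum (curry x) j = 0" if "j \<in> C" for j
    using x(3)[rule_format, of "Inr j"] that sum_snd_indicator_eq_column_sum[OF x(1), of j] by (simp add: Q_def c_def)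
  moreover have "\<exists>i j. curry x i j \<noteq> 0" "\<forall>i j. curry x i j \<noteq> 0 \<longrightarrow> (i, j) \<in> E"
    using x(1,2) by auto
  ultimately show ?thesis by blast
qed

lemma row_sum_outside_support:
  assumes "\<forall>i j. d i j \<noteq> 0 \<longrightarrow> (i, j) \<in> E" "i \<notin> fst ` E"
  shows "row_sum d i = 0"
  using assms unfolding row_sum_def by (intro sum.neutral) force

lemma column_sum_outside_support:
  assumes "\<forall>i j. d i j \<noteq> 0 \<longrightarrow> (i, j) \<in> E" "j \<notin> snd ` E"
  shows "column_sum d j = 0"
  using assms unfolding column_sum_def by (intro sum.neutral) force

lemma last_column_sum_eq_0:
  assumes "\<forall>i. row_sum d i = 0" "\<forall>j. j \<noteq> j0 \<longrightarrow> column_sum d j = 0"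
  shows "column_sum d j0 = 0"
proof -
  have "column_sum d j0 = (\<Sum>j\<in>UNIV. column_sum d j)"
    using assms(2) by (subst sum.remove[of _ j0]) auto
  also have "\<dots> = 0" using assms(1) by (simp add: sum_column_sum_eq_sum_row_sum)
  finally show ?thesis .
qed

lemma exists_balanced_direction:
  fixes E :: "('m::finite \<times> 'n::finite) set" and C :: "'n set"
  assumes "E \<noteq> {}"
    and rows: "\<forall>e\<in>E. \<exists>e'\<in>E. e' \<noteq> e \<and> fst e' = fst e"
    and columns: "\<forall>e\<in>E. snd e \<in> C \<longrightarrow> (\<exists>e'\<in>E. e' \<noteq> e \<and> snd e' = snd e)"
  shows "\<exists>d. (\<exists>i j. d i j \<noteq> 0) \<and> (\<forall>i j. d i j \<noteq> 0 \<longrightarrow> (i, j) \<in> E)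
           \<and> (\<forall>i. row_sum d i = 0) \<and> (\<forall>j\<in>C. column_sum d j = 0)"
proof -
  \<comment> \<open>Every row of E, and every column of E in C, contains at least two points of E: so there
    are at most half as many row constraints, and half as many column constraints, as unknowns.\<close>
  define EC where "EC = {e\<in>E. snd e \<in> C}"
  have card_rows: "2 * card (fst ` E) \<le> card E"
    using rows by (intro card_image_le_half) auto
  have "2 * card (snd ` EC) \<le> card EC"
    using columns by (intro card_image_le_half) (auto simp: EC_def)
  show ?thesis
  proof (cases "EC = E")
    case True
    \<comment> \<open>One column constraint is redundant: the column sums and the row sums have the same total.\<close>
    obtain j0 where j0: "j0 \<in> snd ` E" using assms(1) by auto
    have "0 < card (snd ` E)" using j0 by (auto simp: card_gt_0_iff)
    then have few: "card (fst ` E) + card (snd ` E - {j0}) < card E"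
      using card_rows \<open>2 * card (snd ` EC) \<le> card EC\<close> True j0 by simp
    obtain d where d: "\<exists>i j. d i j \<noteq> 0" "\<forall>i j. d i j \<noteq> 0 \<longrightarrow> (i, j) \<in> E"
      "\<forall>i\<in>fst ` E. row_sum d i = 0" "\<forall>j\<in>snd ` E - {j0}. column_sum d j = 0"
      using exists_direction_few_constraints[OF few] by blast
    have rows: "\<forall>i. row_sum d i = 0"
      using d(3) row_sum_outside_support[OF d(2)] by blast
    moreover have other_columns: "\<forall>j. j \<noteq> j0 \<longrightarrow> column_sum d j = 0"
      using d(4) column_sum_outside_support[OF d(2)] by blast
    ultimately have "column_sum d j = 0" for j
      using last_column_sum_eq_0 by (cases "j = j0") auto
    with d(1,2) rows show ?thesis by blast
  next
    case False
    then have "card EC < card E" using EC_def by (intro psubset_card_mono) auto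
    then have few: "card (fst ` E) + card (snd ` EC) < card E"
      using card_rows \<open>2 * card (snd ` EC) \<le> card EC\<close> by linarith
    obtain d where d: "\<exists>i j. d i j \<noteq> 0" "\<forall>i j. d i j \<noteq> 0 \<longrightarrow> (i, j) \<in> E"
      "\<forall>i\<in>fst ` E. row_sum d i = 0" "\<forall>j\<in>snd ` EC. column_sum d j = 0"
      using exists_direction_few_constraints[OF few] by blast
    have "snd ` E \<inter> C \<subseteq> snd ` EC" by (auto simp: EC_def)
    then have "\<forall>j\<in>C. column_sum d j = 0"
      using d(4) column_sum_outside_support[OF d(2)] by blast
    moreover have "\<forall>i. row_sum d i = 0"
      using d(3) row_sum_outside_support[OF d(2)] by blast
    ultimately show ?thesis using d(1,2) by blast
  qed
qed

definition bounded_stochastic ::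
    "('n \<Rightarrow> int) \<Rightarrow> ('n \<Rightarrow> int) \<Rightarrow> ('m::finite \<Rightarrow> 'n::finite \<Rightarrow> real) \<Rightarrow> bool" where
  "bounded_stochastic a b X \<longleftrightarrow> (\<forall>i j. 0 \<le> X i j) \<and> (\<forall>i. row_sum X i = 1)
      \<and> (\<forall>j. a j \<le> column_sum X j \<and> column_sum X j \<le> b j)"

text \<open>Entries and column sums together: the quantities that the decomposition argument makes
  integral one at a time.\<close>
definition coords :: "('m::finite \<Rightarrow> 'n::finite \<Rightarrow> real) \<Rightarrow> ('m \<times> 'n) + 'n \<Rightarrow> real" where
  "coords X = case_sum (case_prod X) (column_sum X)"

definition fractionality :: "('m::finite \<Rightarrow> 'n::finite \<Rightarrow> real) \<Rightarrow> nat" where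
  "fractionality X = card {k. coords X k \<notin> \<int>}"

lemma coords_add_scaled: "coords (\<lambda>i j. X i j + t * d i j) k = coords X k + t * coords d k"
  by (cases k) (auto simp: coords_def column_sum_def sum.distrib sum_distrib_left)

lemma coords_uminus: "coords (\<lambda>i j. - d i j) k = - coords d k"
  by (cases k) (auto simp: coords_def column_sum_def sum_negf)

lemma row_sum_uminus: "row_sum (\<lambda>i j. - d i j) i = - row_sum d i"
  by (simp add: row_sum_def sum_negf)

lemma row_sum_add_scaled: "row_sum (\<lambda>i j. X i j + t * d i j) i = row_sum X i + t * row_sum d i"
  by (simp add: row_sum_def sum.distrib sum_distrib_left)

lemma fractional_direction:
  assumes "bounded_stochastic a b X" "fractionality X \<noteq> 0"
  shows "\<exists>d. (\<exists>i j. d i j \<noteq> 0) \<and> (\<forall>i. row_sum d i = 0)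
           \<and> (\<forall>k. coords X k \<in> \<int> \<longrightarrow> coords d k = 0)"
proof -
  define E where "E = {(i, j). X i j \<notin> \<int>}"
  define C where "C = {j. column_sum X j \<in> \<int>}"
  have "E \<noteq> {}"
  proof
    assume "E = {}"
    then have "coords X k \<in> \<int>" for k
      by (cases k) (auto simp: E_def coords_def column_sum_def intro!: Ints_sum)
    then show False using assms(2) by (simp add: fractionality_def)
  qed
  moreover have "\<exists>e'\<in>E. e' \<noteq> e \<and> fst e' = fst e" if "e \<in> E" for e
  proof -
    obtain i j where e: "e = (i, j)" "X i j \<notin> \<int>" using \<open>e \<in> E\<close> by (auto simp: E_def)
    have "(\<Sum>j\<in>UNIV. X i j) \<in> \<int>" using assms(1) by (simp add: bounded_stochastic_def row_sum_def)
    then obtain j' where "j' \<noteq> j" "X i j' \<notin> \<int>" using Ints_sum_nonint_summand[of UNIV "X i" j] e by auto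
    then show ?thesis using e by (intro bexI[of _ "(i, j')"]) (auto simp: E_def)
  qed
  moreover have "\<exists>e'\<in>E. e' \<noteq> e \<and> snd e' = snd e" if "e \<in> E" "snd e \<in> C" for e
  proof -
    obtain i j where e: "e = (i, j)" "X i j \<notin> \<int>" using \<open>e \<in> E\<close> by (auto simp: E_def)
    have "(\<Sum>i\<in>UNIV. X i j) \<in> \<int>" using that e by (simp add: C_def column_sum_def)
    then obtain i' where "i' \<noteq> i" "X i' j \<notin> \<int>" using Ints_sum_nonint_summand[of UNIV "\<lambda>i. X i j" i] e by auto
    then show ?thesis using e by (intro bexI[of _ "(i', j)"]) (auto simp: E_def)
  qed
  ultimately obtain d where d: "\<exists>i j. d i j \<noteq> 0" "\<forall>i j. d i j \<noteq> 0 \<longrightarrow> (i, j) \<in> E"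
    "\<forall>i. row_sum d i = 0" "\<forall>j\<in>C. column_sum d j = 0"
    using exists_balanced_direction[of E C] by blast
  have "coords d k = 0" if "coords X k \<in> \<int>" for k
    using that d(2,4) by (cases k) (auto simp: coords_def E_def C_def)
  with d(1,3) show ?thesis by blast
qed

lemma fractionality_decreasing_step:
  assumes X: "bounded_stochastic a b X"
    and d: "\<exists>i j. d i j \<noteq> 0" "\<forall>i. row_sum d i = 0" "\<forall>k. coords X k \<in> \<int> \<longrightarrow> coords d k = 0"
  shows "\<exists>t>0. bounded_stochastic a b (\<lambda>i j. X i j + t * d i j)
               \<and> fractionality (\<lambda>i j. X i j + t * d i j) < fractionality X"
proof -
  define K where "K = {k. coords X k \<notin> \<int>}"
  have "\<exists>k\<in>K. coords d k \<noteq> 0"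
  proof -
    obtain i j where "d i j \<noteq> 0" using d(1) by blast
    then have "Inl (i, j) \<in> K" "coords d (Inl (i, j)) \<noteq> 0"
      using d(3)[rule_format, of "Inl (i, j)"] by (auto simp: K_def coords_def)
    then show ?thesis by blast
  qed
  moreover have "finite K" "\<forall>k\<in>K. coords X k \<notin> \<int>" by (simp_all add: K_def)
  ultimately obtain t k0 where t: "t > 0"
    "\<forall>k\<in>K. \<lfloor>coords X k\<rfloor> \<le> coords X k + t * coords d k \<and> coords X k + t * coords d k \<le> \<lceil>coords X k\<rceil>"
    and k0: "k0 \<in> K" "coords X k0 + t * coords d k0 \<in> \<int>"
    using ray_reaches_integer[of K "coords X" "coords d"] by blast
  define Y where "Y = (\<lambda>i j. X i j + t * d i j)"
  have box: "\<lfloor>coords X k\<rfloor> \<le> coords Y k \<and> coords Y k \<le> \<lceil>coords X k\<rceil>" for k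
  proof (cases "k \<in> K")
    case False
    then obtain z where "coords X k = of_int z" "coords d k = 0"
      using d(3) by (auto simp: K_def elim!: Ints_cases)
    then show ?thesis by (simp add: Y_def coords_add_scaled)
  qed (use t in \<open>simp add: Y_def coords_add_scaled\<close>)
  have "0 \<le> Y i j" for i j
  proof -
    have "0 \<le> real_of_int \<lfloor>X i j\<rfloor>" using X by (simp add: bounded_stochastic_def)
    moreover have "\<lfloor>X i j\<rfloor> \<le> Y i j" using box[of "Inl (i, j)"] by (simp add: coords_def)
    ultimately show ?thesis by linarith
  qed
  moreover have "row_sum Y i = 1" for i
    using X d(2) by (simp add: Y_def row_sum_add_scaled bounded_stochastic_def)
  moreover have "a j \<le> column_sum Y j \<and> column_sum Y j \<le> b j" for j
  proof -
    have "a j \<le> \<lfloor>column_sum X j\<rfloor>" "\<lceil>column_sum X j\<rceil> \<le> b j"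
      using X by (simp_all add: bounded_stochastic_def le_floor_iff ceiling_le_iff)
    then show ?thesis using box[of "Inr j"] by (simp add: coords_def)
  qed
  moreover have "fractionality Y < fractionality X"
  proof -
    have "{k. coords Y k \<notin> \<int>} \<subseteq> K - {k0}"
      using d(3) k0(2) by (auto simp: K_def Y_def coords_add_scaled)
    then have "card {k. coords Y k \<notin> \<int>} \<le> card (K - {k0})" by (intro card_mono) auto
    also have "\<dots> < card K" using k0(1) by (intro card_Diff1_less) auto
    finally show ?thesis by (simp add: fractionality_def K_def)
  qed
  ultimately show ?thesis using t(1) unfolding bounded_stochastic_def Y_def by blast
qed

text \<open>A probability distribution on the maps f, i.e. on the deterministic matrices [f i = j],
  whose mixture is X.\<close>
definition map_decomposition :: "('m::finite \<Rightarrow> 'n::finite \<Rightarrow> real) \<Rightarrow> (('m \<Rightarrow> 'n) \<Rightarrow> real) \<Rightarrow> bool" where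
  "map_decomposition X \<mu> \<longleftrightarrow> (\<forall>f. 0 \<le> \<mu> f) \<and> sum \<mu> UNIV = 1 \<and> (\<forall>i j. X i j = sum \<mu> {f. f i = j})"

definition fibres_within :: "('n \<Rightarrow> int) \<Rightarrow> ('n \<Rightarrow> int) \<Rightarrow> ('m::finite \<Rightarrow> 'n) \<Rightarrow> bool" where
  "fibres_within a b f \<longleftrightarrow> (\<forall>j. a j \<le> int (card {i. f i = j}) \<and> int (card {i. f i = j}) \<le> b j)"

lemma map_decomposition_mix:
  assumes "map_decomposition (\<lambda>i j. X i j + s * d i j) \<mu>" "map_decomposition (\<lambda>i j. X i j - t * d i j) \<nu>"
    and "0 < s" "0 < t"
  shows "map_decomposition X (\<lambda>f. (t * \<mu> f + s * \<nu> f) / (s + t))"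
proof -
  have sum_mix: "(\<Sum>f\<in>A. (t * \<mu> f + s * \<nu> f) / (s + t)) = (t * sum \<mu> A + s * sum \<nu> A) / (s + t)" for A
    by (simp add: sum_divide_distrib[symmetric] sum.distrib sum_distrib_left)
  have "X i j = (t * (X i j + s * d i j) + s * (X i j - t * d i j)) / (s + t)" for i j
    using assms(3,4) by (simp add: field_simps)
  with assms show ?thesis
    unfolding map_decomposition_def sum_mix by (simp add: add_pos_pos less_imp_le)
qed

lemma map_decomposition_map: "map_decomposition (\<lambda>i j. of_bool (f i = j)) (\<lambda>g. of_bool (g = f))"
  unfolding map_decomposition_def by (simp add: eq_commute)

lemma zero_one_stochastic_eq_map:
  fixes X :: "'m \<Rightarrow> 'n::finite \<Rightarrow> real"
  assumes "\<forall>i j. X i j = 0 \<or> X i j = 1" "\<forall>i. row_sum X i = 1"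
  shows "\<exists>f. X = (\<lambda>i j. of_bool (f i = j))"
proof -
  have "\<exists>j. X i j = 1" for i
  proof (rule ccontr)
    assume "\<nexists>j. X i j = 1"
    then have "X i j = 0" for j using assms(1) by metis
    then have "row_sum X i = 0" by (simp add: row_sum_def)
    with assms(2) show False by simp
  qed
  then obtain f where f: "X i (f i) = 1" for i by metis
  have "X i j = 0" if "j \<noteq> f i" for i j
  proof (rule ccontr)
    assume "X i j \<noteq> 0"
    then have "2 = (\<Sum>j'\<in>{j, f i}. X i j')" using assms(1) f that by auto
    also have "\<dots> \<le> row_sum X i"
      unfolding row_sum_def using assms(1) by (intro sum_mono2) (auto, metis order.refl zero_le_one)
    finally show False using assms(2) by simp
  qed
  then have "X = (\<lambda>i j. of_bool (f i = j))" using f by (auto intro!: ext)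
  then show ?thesis by blast
qed

lemma column_sum_map: "column_sum (\<lambda>i j. of_bool (f i = j)) j = card {i. f i = j}"
  by (simp add: column_sum_def sum.If_cases)

lemma bounded_stochastic_le_1: "bounded_stochastic a b X \<Longrightarrow> X i j \<le> 1"
  unfolding bounded_stochastic_def row_sum_def
  by (metis member_le_sum finite UNIV_I)

lemma integral_bounded_stochastic_decomposition:
  assumes "bounded_stochastic a b X" "fractionality X = 0"
  shows "\<exists>\<mu>. map_decomposition X \<mu> \<and> (\<forall>f. \<mu> f \<noteq> 0 \<longrightarrow> fibres_within a b f)"
proof -
  have "X i j \<in> \<int>" for i j
    using assms(2) by (auto simp: fractionality_def coords_def dest: spec[of _ "Inl (i, j)"])
  moreover have "0 \<le> X i j" "X i j \<le> 1" for i j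
    using assms(1) bounded_stochastic_le_1[OF assms(1)] by (auto simp: bounded_stochastic_def)
  ultimately have "X i j = 0 \<or> X i j = 1" for i j
  proof -
    obtain z where z: "X i j = of_int z" using \<open>X i j \<in> \<int>\<close> by (auto elim: Ints_cases)
    then have "0 \<le> z" "z \<le> 1" using \<open>0 \<le> X i j\<close> \<open>X i j \<le> 1\<close> by simp_all
    then show ?thesis using z by (cases "z = 0") auto
  qed
  then obtain f where f: "X = (\<lambda>i j. of_bool (f i = j))"
    using zero_one_stochastic_eq_map[of X] assms(1) by (auto simp: bounded_stochastic_def)
  have "fibres_within a b f"
    unfolding fibres_within_def
  proof
    fix j
    have "real_of_int (a j) \<le> real_of_int (int (card {i. f i = j}))"
      "real_of_int (int (card {i. f i = j})) \<le> real_of_int (b j)"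
      using assms(1) by (simp_all add: bounded_stochastic_def f column_sum_map)
    then show "a j \<le> int (card {i. f i = j}) \<and> int (card {i. f i = j}) \<le> b j"
      by (simp only: of_int_le_iff)
  qed
  then show ?thesis using map_decomposition_map[of f] f by force
qed

theorem bounded_stochastic_decomposition:
  assumes "bounded_stochastic a b X"
  shows "\<exists>\<mu>. map_decomposition X \<mu> \<and> (\<forall>f. \<mu> f \<noteq> 0 \<longrightarrow> fibres_within a b f)"
  using assms
proof (induction "fractionality X" arbitrary: X rule: less_induct)
  case less
  show ?case
  proof (cases "fractionality X = 0")
    case True
    with less.prems show ?thesis by (rule integral_bounded_stochastic_decomposition)
  next
    case False
    obtain d where d: "\<exists>i j. d i j \<noteq> 0" "\<forall>i. row_sum d i = 0" "\<forall>k. coords X k \<in> \<int> \<longrightarrow> coords d k = 0"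
      using fractional_direction[OF less.prems False] by blast
    then have neg_d: "\<exists>i j. - d i j \<noteq> 0" "\<forall>i. row_sum (\<lambda>i j. - d i j) i = 0"
      "\<forall>k. coords X k \<in> \<int> \<longrightarrow> coords (\<lambda>i j. - d i j) k = 0"
      by (simp_all add: coords_uminus row_sum_uminus)
    obtain s t where "s > 0" "t > 0"
      and "bounded_stochastic a b (\<lambda>i j. X i j + s * d i j)"
        "fractionality (\<lambda>i j. X i j + s * d i j) < fractionality X"
      and "bounded_stochastic a b (\<lambda>i j. X i j - t * d i j)"
        "fractionality (\<lambda>i j. X i j - t * d i j) < fractionality X"
      using fractionality_decreasing_step[OF less.prems d]
        fractionality_decreasing_step[OF less.prems neg_d] by auto
    with less.hyps obtain \<mu> \<nu>
      where \<mu>: "map_decomposition (\<lambda>i j. X i j + s * d i j) \<mu>" "\<forall>f. \<mu> f \<noteq> 0 \<longrightarrow> fibres_within a b f"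
        and \<nu>: "map_decomposition (\<lambda>i j. X i j - t * d i j) \<nu>" "\<forall>f. \<nu> f \<noteq> 0 \<longrightarrow> fibres_within a b f"
      by meson
    define \<rho> where "\<rho> f = (t * \<mu> f + s * \<nu> f) / (s + t)" for f
    have "map_decomposition X \<rho>"
      unfolding \<rho>_def using \<mu>(1) \<nu>(1) \<open>s > 0\<close> \<open>t > 0\<close> by (rule map_decomposition_mix)
    moreover have "\<mu> f \<noteq> 0 \<or> \<nu> f \<noteq> 0" if "\<rho> f \<noteq> 0" for f
      using that by (auto simp: \<rho>_def)
    ultimately show ?thesis using \<mu>(2) \<nu>(2) by blast
  qed
qed

lemma column_sum_map_decomposition:
  assumes "map_decomposition X \<mu>"
  shows "column_sum X j = (\<Sum>f\<in>UNIV. \<mu> f * real (card {i. f i = j}))"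
proof -
  have "column_sum X j = (\<Sum>i\<in>UNIV. \<Sum>f\<in>UNIV. \<mu> f * of_bool (f i = j))"
    using assms by (simp add: column_sum_def map_decomposition_def sum.If_cases)
  also have "\<dots> = (\<Sum>f\<in>UNIV. \<mu> f * column_sum (\<lambda>i j. of_bool (f i = j)) j)"
    by (subst sum.swap) (simp only: column_sum_def sum_distrib_left)
  finally show ?thesis by (simp only: column_sum_map)
qed

lemma map_decomposition_support:
  assumes "map_decomposition X \<mu>" "\<mu> f \<noteq> 0"
  shows "X i (f i) \<noteq> 0"
proof -
  have "0 < \<mu> f" using assms by (simp add: map_decomposition_def order.strict_iff_order)
  also have "\<mu> f \<le> sum \<mu> {g. g i = f i}"
    using assms(1) by (intro member_le_sum) (auto simp: map_decomposition_def)
  finally show ?thesis using assms(1) by (simp add: map_decomposition_def)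
qed

lemma column_sum_le_injective_mass:
  assumes "map_decomposition X \<mu>"
  shows "column_sum X j \<le> sum \<mu> {f. inj f} + real (card {i. X i j \<noteq> 0}) * (1 - sum \<mu> {f. inj f})"
proof -
  define w where "w = real (card {i. X i j \<noteq> 0})"
  have "\<mu> f * real (card {i. f i = j}) \<le> \<mu> f * (if inj f then 1 else w)" for f
  proof (cases "\<mu> f = 0")
    case False
    have "real (card {i. f i = j}) \<le> 1" if "inj f"
      using that by (simp add: card_le_Suc0_iff_eq inj_def)
    moreover have "real (card {i. f i = j}) \<le> w"
      unfolding w_def of_nat_le_iff using map_decomposition_support[OF assms False] by (intro card_mono) auto
    ultimately show ?thesis
      using assms by (intro mult_left_mono) (auto simp: map_decomposition_def)
  qed simp
  then have "column_sum X j \<le> (\<Sum>f\<in>UNIV. \<mu> f * (if inj f then 1 else w))"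
    unfolding column_sum_map_decomposition[OF assms] by (intro sum_mono) simp
  also have "\<dots> = sum \<mu> {f. inj f} + w * sum \<mu> {f. \<not> inj f}"
    by (simp add: if_distrib sum.If_cases sum_distrib_left mult.commute Collect_neg_eq)
  also have "sum \<mu> {f. \<not> inj f} = sum \<mu> UNIV - sum \<mu> {f. inj f}"
    by (simp add: Collect_neg_eq Compl_eq_Diff_UNIV sum_diff)
  also have "sum \<mu> UNIV = 1" using assms by (simp add: map_decomposition_def)
  finally show ?thesis by (simp add: w_def)
qed

lemma surjective_mass_le_column_sum:
  assumes "map_decomposition X \<mu>"
  shows "sum \<mu> {f. surj f} \<le> column_sum X j"
proof -
  have "(if surj f then \<mu> f else 0) \<le> \<mu> f * real (card {i. f i = j})" for f
  proof -
    have "0 \<le> \<mu> f" using assms by (simp add: map_decomposition_def)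
    moreover have "1 \<le> real (card {i. f i = j})" if surj: "surj f"
    proof -
      obtain i where "f i = j" using surjD[OF surj] by metis
      then have "{i. f i = j} \<noteq> {}" by auto
      then show ?thesis by (simp add: Suc_le_eq card_gt_0_iff)
    qed
    ultimately show ?thesis
      using mult_left_mono[of 1 "real (card {i. f i = j})" "\<mu> f"] by auto
  qed
  then have "(\<Sum>f\<in>UNIV. if surj f then \<mu> f else 0) \<le> column_sum X j"
    unfolding column_sum_map_decomposition[OF assms] by (intro sum_mono)
  then show ?thesis by (simp add: sum.If_cases)
qed

lemma map_decomposition_mass_le_1: "map_decomposition X \<mu> \<Longrightarrow> sum \<mu> A \<le> 1"
  unfolding map_decomposition_def by (metis sum_mono2 finite subset_UNIV)

lemma inj_if_fibres_within_0_1: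
  assumes "fibres_within (\<lambda>_. 0) (\<lambda>_. 1) f"
  shows "inj f"
proof (rule injI)
  fix x y assume "f x = f y"
  have "card {i. f i = f x} \<le> Suc 0" using assms by (simp add: fibres_within_def)
  with \<open>f x = f y\<close> show "x = y" by (auto simp: card_le_Suc0_iff_eq)
qed

lemma surj_if_fibres_ge_1: "fibres_within (\<lambda>_. 1) b f \<Longrightarrow> surj f"
  unfolding fibres_within_def surj_def by (metis (mono_tags) Collect_empty_eq card.empty of_nat_0 zero_less_one not_le)

section \<open>Deterministic channels and maps\<close>

definition map_channel :: "('m::finite \<Rightarrow> 'n::finite) \<Rightarrow> real^'n^'m" where
  "map_channel f = (\<chi> i j. of_bool (f i = j))"

lemma map_channel_nth [simp]: "map_channel f $ i $ j = of_bool (f i = j)"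
  by (simp add: map_channel_def)

lemma channel_le_1: "channel W \<Longrightarrow> W $ i $ j \<le> 1"
  unfolding channel_def by (metis member_le_sum finite UNIV_I)

lemma det_channels_eq_range_map_channel: "det_channels = range map_channel"
proof (intro equalityI subsetI)
  fix D :: "real^'n^'m" assume "D \<in> det_channels"
  then obtain f where "(\<lambda>i j. D $ i $ j) = (\<lambda>i j. of_bool (f i = j))"
    using zero_one_stochastic_eq_map[of "\<lambda>i j. D $ i $ j"]
    by (auto simp: det_channels_def channel_def row_sum_def)
  then have "D = map_channel f" by (simp add: vec_eq_iff fun_eq_iff)
  then show "D \<in> range map_channel" by blast
qed (auto simp: det_channels_def channel_def)

lemma inj_map_channel: "inj map_channel"
proof (rule injI)
  fix f g :: "'m::finite \<Rightarrow> 'n::finite" assume "map_channel f = map_channel g"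
  then have "map_channel f $ i $ f i = map_channel g $ i $ f i" for i by simp
  then show "f = g" by (auto simp: fun_eq_iff)
qed

lemma sum_det_channels: "(\<Sum>D\<in>det_channels. h D) = (\<Sum>f\<in>UNIV. h (map_channel f))"
  unfolding det_channels_eq_range_map_channel by (simp add: sum.reindex inj_map_channel)

lemma P_rank_eq_sum_maps: "P_rank lam r = (\<Sum>f | rank (map_channel f) = r. lam (map_channel f))"
proof -
  have maps: "{D \<in> det_channels. rank D = r} = map_channel ` {f. rank (map_channel f) = r}"
    unfolding det_channels_eq_range_map_channel by auto
  show ?thesis
    unfolding P_rank_def maps by (simp add: sum.reindex inj_on_subset[OF inj_map_channel])
qed

lemma map_channel_mult: "map_channel f *v x = (\<chi> i. x $ f i)"
  by (simp add: vec_eq_iff matrix_vector_mult_def if_distrib if_distribR cong: if_cong)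

lemma rank_map_channel_eq_card_domain_iff:
  "rank (map_channel (f :: 'm::finite \<Rightarrow> 'n::finite)) = CARD('m) \<longleftrightarrow> inj f"
proof -
  have "surj ((*v) (map_channel f)) \<longleftrightarrow> inj f"
  proof
    assume surj: "surj ((*v) (map_channel f))"
    show "inj f"
    proof (rule injI, rule ccontr)
      fix i1 i2 assume "f i1 = f i2" "i1 \<noteq> i2"
      obtain x where x: "map_channel f *v x = (\<chi> i. of_bool (i = i1))"
        using surjD[OF surj, of "\<chi> i. of_bool (i = i1)"] by auto
      have "(map_channel f *v x) $ i1 = 1" "(map_channel f *v x) $ i2 = 0"
        unfolding x using \<open>i1 \<noteq> i2\<close> by simp_all
      then have "x $ f i1 = 1" "x $ f i2 = 0" by (simp_all add: map_channel_mult)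
      with \<open>f i1 = f i2\<close> show False by simp
    qed
  next
    assume "inj f"
    then have "map_channel f *v (\<chi> j. y $ inv f j) = y" for y
      by (simp add: map_channel_mult vec_eq_iff)
    then show "surj ((*v) (map_channel f))" by (rule surjI)
  qed
  then show ?thesis by (simp add: full_rank_surjective)
qed

lemma rank_map_channel_eq_card_range_iff:
  "rank (map_channel (f :: 'm::finite \<Rightarrow> 'n::finite)) = CARD('n) \<longleftrightarrow> surj f"
proof -
  have "inj ((*v) (map_channel f)) \<longleftrightarrow> surj f"
  proof
    assume inj: "inj ((*v) (map_channel f))"
    show "surj f"
    proof (rule ccontr)
      assume "\<not> surj f"
      then obtain j where j: "j \<notin> range f" by blast
      have "map_channel f *v (\<chi> k. of_bool (k = j)) = map_channel f *v 0"
        using j by (auto simp: map_channel_mult vec_eq_iff)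
      then have "(\<chi> k. of_bool (k = j)) = (0 :: real^'n)" using injD[OF inj] by blast
      then show False by (simp add: vec_eq_iff)
    qed
  next
    assume "surj f"
    show "inj ((*v) (map_channel f))"
    proof (rule injI)
      fix x y :: "real^'n"
      assume "map_channel f *v x = map_channel f *v y"
      then have "x $ f i = y $ f i" for i by (simp add: map_channel_mult vec_eq_iff)
      with \<open>surj f\<close> show "x = y" by (metis surjD vec_eq_iff)
    qed
  qed
  then show ?thesis by (simp add: full_rank_injective)
qed

lemma decomps_map_decomposition:
  assumes "lam \<in> decomps W"
  shows "map_decomposition (\<lambda>i j. W $ i $ j) (lam \<circ> map_channel)"
proof -
  have "W $ i $ j = sum (lam \<circ> map_channel) {f. f i = j}" for i j
  proof -
    have "W $ i $ j = (\<Sum>D\<in>det_channels. lam D * D $ i $ j)"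
      using assms by (simp add: decomps_def)
    also have "\<dots> = sum (lam \<circ> map_channel) {f. f i = j}"
      by (simp add: sum_det_channels sum.If_cases)
    finally show ?thesis .
  qed
  then show ?thesis
    using assms by (simp add: map_decomposition_def decomps_def sum_det_channels)
qed

lemma map_decomposition_decomps:
  assumes "map_decomposition (\<lambda>i j. W $ i $ j) \<mu>"
  shows "\<exists>lam\<in>decomps W. lam \<circ> map_channel = \<mu>"
proof -
  define lam where "lam D = (if D \<in> det_channels then \<mu> (inv map_channel D) else 0)" for D
  have lam_map: "lam \<circ> map_channel = \<mu>"
    by (auto simp: lam_def det_channels_eq_range_map_channel inv_f_f[OF inj_map_channel])
  have "(\<Sum>D\<in>det_channels. lam D *\<^sub>R D) $ i $ j = W $ i $ j" for i j
    using assms lam_map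
    by (simp add: sum_det_channels map_decomposition_def sum.If_cases flip: comp_apply[of lam map_channel])
  moreover have "(\<Sum>D\<in>det_channels. lam D) = 1"
    using assms lam_map by (simp add: sum_det_channels map_decomposition_def flip: comp_apply[of lam map_channel])
  ultimately have "lam \<in> decomps W"
    using assms by (auto simp: decomps_def lam_def map_decomposition_def vec_eq_iff)
  with lam_map show ?thesis by blast
qed

lemma channel_bounded_stochastic:
  assumes "channel W" "\<forall>j. a j \<le> col_sum W j \<and> col_sum W j \<le> b j"
  shows "bounded_stochastic a b (\<lambda>i j. W $ i $ j)"
  using assms by (simp add: bounded_stochastic_def channel_def row_sum_def column_sum_def col_sum_def)

lemma col_sum_nonneg: "channel W \<Longrightarrow> 0 \<le> col_sum W j"
  unfolding channel_def col_sum_def by (simp add: sum_nonneg)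

lemma col_sum_le_card: "channel W \<Longrightarrow> col_sum (W :: real^'n^'m) j \<le> CARD('m)"
  unfolding col_sum_def using channel_le_1 sum_mono[of UNIV "\<lambda>i. W $ i $ j" "\<lambda>_. 1"] by auto

lemma P_rank_le_1:
  assumes "lam \<in> decomps W"
  shows "P_rank lam r \<le> 1"
proof -
  have "P_rank lam r \<le> (\<Sum>D\<in>det_channels. lam D)"
    unfolding P_rank_def det_channels_eq_range_map_channel
    using assms by (intro sum_mono2) (auto simp: decomps_def)
  then show ?thesis using assms by (simp add: decomps_def)
qed

lemma P_max_le:
  fixes W :: "real^'n::finite^'m::finite"
  assumes "channel W"
    and "\<And>\<mu>. map_decomposition (\<lambda>i j. W $ i $ j) \<mu> \<Longrightarrow> sum \<mu> {f. rank (map_channel f) = r} \<le> B"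
  shows "P_max W r \<le> B"
proof -
  have "bounded_stochastic (\<lambda>_. 0) (\<lambda>_. int CARD('m)) (\<lambda>i j. W $ i $ j)"
    using assms(1) col_sum_nonneg col_sum_le_card by (intro channel_bounded_stochastic) auto
  then have "decomps W \<noteq> {}"
    using bounded_stochastic_decomposition map_decomposition_decomps by blast
  moreover have "P_rank lam r \<le> B" if "lam \<in> decomps W" for lam
    using assms(2)[OF decomps_map_decomposition[OF that]] by (simp add: P_rank_eq_sum_maps)
  ultimately show ?thesis
    unfolding P_max_def by (intro cSup_least) auto
qed

lemma P_max_eq_1:
  assumes "map_decomposition (\<lambda>i j. W $ i $ j) \<mu>" "\<forall>f. \<mu> f \<noteq> 0 \<longrightarrow> rank (map_channel f) = r"
  shows "P_max W r = 1"
proof -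
  obtain lam where lam: "lam \<in> decomps W" "lam \<circ> map_channel = \<mu>"
    using map_decomposition_decomps[OF assms(1)] by blast
  have "P_rank lam r = sum \<mu> {f. rank (map_channel f) = r}"
    unfolding P_rank_eq_sum_maps lam(2)[symmetric] by simp
  also have "\<dots> = sum \<mu> UNIV"
    using assms(2) by (intro sum.mono_neutral_left) auto
  also have "\<dots> = 1" using assms(1) by (simp add: map_decomposition_def)
  finally show ?thesis
    unfolding P_max_def using lam(1) P_rank_le_1 by (intro cSup_eq_maximum) (force, auto)
qed

section \<open>Bounds on the probability of full rank\<close>

lemma beta_le:
  assumes "P \<le> 1" "\<forall>j. col_sum W j \<le> P + real (col_weight W j) * (1 - P)"
  shows "beta W \<le> 1 - P"
proof -
  have "beta' W j \<le> 1 - P" for j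
  proof (cases "col_weight W j > 1")
    case True
    then have "col_sum W j - 1 \<le> (1 - P) * (real (col_weight W j) - 1)"
      using assms(2) by (simp add: algebra_simps)
    with True show ?thesis by (simp add: beta'_def pos_divide_le_eq)
  qed (use assms(1) in \<open>simp add: beta'_def\<close>)
  then show ?thesis using assms(1) by (simp add: beta_def)
qed

lemma col_sum_le_1_if_beta_eq_0:
  assumes "channel W" "beta W = 0"
  shows "col_sum W j \<le> 1"
proof (cases "col_weight W j > 1")
  case True
  have "beta' W j \<le> Max (range (beta' W))" by (rule Max_ge) auto
  then have "beta' W j \<le> beta W" by (simp add: beta_def le_max_iff_disj)
  with True assms(2) show ?thesis by (simp add: beta'_def divide_le_0_iff)
next
  case False
  have "col_sum W j = (\<Sum>i | W $ i $ j \<noteq> 0. W $ i $ j)"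
    unfolding col_sum_def by (rule sum.mono_neutral_right) auto
  also have "\<dots> \<le> real (col_weight W j)"
    unfolding col_weight_def using channel_le_1[OF assms(1)]
    by (metis (no_types, lifting) sum_mono card_eq_sum of_nat_sum of_nat_1)
  finally show ?thesis using False by simp
qed

lemma le_hval: "P \<le> 1 \<Longrightarrow> \<forall>j. P \<le> col_sum W j \<Longrightarrow> P \<le> hval W"
  by (simp add: hval_def)

lemma col_sum_ge_1_if_hval_eq_1: "hval W = 1 \<Longrightarrow> 1 \<le> col_sum W j"
  unfolding hval_def by (metis Min_le finite_imageI finite rangeI min.bounded_iff order.refl order_trans)

lemma P_max_card_domain_le:
  fixes W :: "real^'n::finite^'m::finite"
  assumes "channel W"
  shows "P_max W CARD('m) \<le> 1 - beta W"
proof (rule P_max_le[OF assms])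
  fix \<mu> assume \<mu>: "map_decomposition (\<lambda>i j. W $ i $ j) \<mu>"
  have "col_sum W j \<le> sum \<mu> {f. inj f} + real (col_weight W j) * (1 - sum \<mu> {f. inj f})" for j
    using column_sum_le_injective_mass[OF \<mu>, of j] by (simp add: col_sum_def column_sum_def col_weight_def)
  with map_decomposition_mass_le_1[OF \<mu>]
  show "sum \<mu> {f. rank (map_channel f) = CARD('m)} \<le> 1 - beta W"
    using beta_le[of "sum \<mu> {f. inj f}" W] by (simp add: rank_map_channel_eq_card_domain_iff)
qed

lemma P_max_card_domain_eq_1:
  fixes W :: "real^'n::finite^'m::finite"
  assumes "channel W" "beta W = 0"
  shows "P_max W CARD('m) = 1"
proof -
  have "bounded_stochastic (\<lambda>_. 0) (\<lambda>_. 1) (\<lambda>i j. W $ i $ j)"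
    using assms col_sum_nonneg col_sum_le_1_if_beta_eq_0 by (intro channel_bounded_stochastic) auto
  then obtain \<mu> where \<mu>: "map_decomposition (\<lambda>i j. W $ i $ j) \<mu>"
    "\<forall>f. \<mu> f \<noteq> 0 \<longrightarrow> fibres_within (\<lambda>_. 0) (\<lambda>_. 1) f"
    using bounded_stochastic_decomposition by blast
  moreover have "\<forall>f. \<mu> f \<noteq> 0 \<longrightarrow> inj f" using \<mu>(2) inj_if_fibres_within_0_1 by blast
  ultimately show ?thesis by (intro P_max_eq_1) (simp_all add: rank_map_channel_eq_card_domain_iff)
qed

lemma P_max_card_range_le:
  fixes W :: "real^'n::finite^'m::finite"
  assumes "channel W"
  shows "P_max W CARD('n) \<le> hval W"
proof (rule P_max_le[OF assms])
  fix \<mu> assume \<mu>: "map_decomposition (\<lambda>i j. W $ i $ j) \<mu>"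
  have "sum \<mu> {f. surj f} \<le> col_sum W j" for j
    using surjective_mass_le_column_sum[OF \<mu>, of j] by (simp add: col_sum_def column_sum_def)
  with map_decomposition_mass_le_1[OF \<mu>]
  show "sum \<mu> {f. rank (map_channel f) = CARD('n)} \<le> hval W"
    by (simp add: rank_map_channel_eq_card_range_iff le_hval)
qed

lemma P_max_card_range_eq_1:
  fixes W :: "real^'n::finite^'m::finite"
  assumes "channel W" "hval W = 1"
  shows "P_max W CARD('n) = 1"
proof -
  have "bounded_stochastic (\<lambda>_. 1) (\<lambda>_. int CARD('m)) (\<lambda>i j. W $ i $ j)"
    using assms col_sum_ge_1_if_hval_eq_1 col_sum_le_card by (intro channel_bounded_stochastic) auto
  then obtain \<mu> where \<mu>: "map_decomposition (\<lambda>i j. W $ i $ j) \<mu>"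
    "\<forall>f. \<mu> f \<noteq> 0 \<longrightarrow> fibres_within (\<lambda>_. 1) (\<lambda>_. int CARD('m)) f"
    using bounded_stochastic_decomposition by blast
  moreover have "\<forall>f. \<mu> f \<noteq> 0 \<longrightarrow> surj f" using \<mu>(2) surj_if_fibres_ge_1 by blast
  ultimately show ?thesis by (intro P_max_eq_1) (simp_all add: rank_map_channel_eq_card_range_iff)
qed

theorem proposition9:
  fixes W :: "real^'n^'m"
  assumes "CARD('m) \<ge> 2" and "CARD('n) \<ge> 2" and "channel W"
  shows "(CARD('m) \<le> CARD('n) \<longrightarrow>
            P_max W CARD('m) \<le> 1 - beta W \<and> (beta W = 0 \<longrightarrow> P_max W CARD('m) = 1))
       \<and> (CARD('m) \<ge> CARD('n) \<longrightarrow>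
            P_max W CARD('n) \<le> hval W \<and> (hval W = 1 \<longrightarrow> P_max W CARD('n) = 1))"
  using P_max_card_domain_le P_max_card_domain_eq_1 P_max_card_range_le P_max_card_range_eq_1 assms(3)
  by blast

end
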